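(* Let $F$ be a fully-connected ReLU network with node maps $F_{ij}$ and canonical polyhedral complex $\mathcal{C}(F)$. For every cell $C$ of $\mathcal{C}(F)$ and every node map $F_{ij}$, the sign of $F_{ij}$ is constant on the interior $C^\circ$ of $C$, so the sign sequence $s(C)\in\{-1,0,1\}^N$, $s_{ij}(C)=\mathrm{sgn}(F_{ij}(x))$ for $x\in C^\circ$, is well-defined; moreover the map $s$ from the set of cells of $\mathcal{C}(F)$ to $\{-1,0,1\}^N$ is injective.
   Context: Polyhedra are intersections of finitely many closed half-spaces of some $\mathbb{R}^n$ (possibly unbounded); $C^\circ$ denotes the interior of a polyhedron $C$ relative to its affine span (a point is its own interior). A polyhedral complex is a finite set of polyhedra closed under taking faces such that any two members intersect in a common face. A ReLU network of architecture $(n_0,\dots,n_m,1)$ is given by affine maps $A_i:\mathbb{R}^{n_{i-1}}\to\mathbb{R}^{n_i}$, $1\le i\le m+1$, $n_{m+1}=1$; $F_i=\mathrm{ReLU}\circ A_i$ ($i\le m$, ReLU coordinatewise), $G=A_{m+1}$, $F=G\circ F_m\circ\cdots\circ F_1$, $F_{(k)}=F_k\circ\cdots\circ F_1$ ($F_{(0)}=\mathrm{id}$). The node maps are $F_{ij}=\pi_j\circ A_i\circ F_{(i-1)}:\mathbb{R}^{n_0}\to\mathbb{R}$ for $1\le i\le m+1$, $1\le j\le n_i$; $N=n_1+\cdots+n_m+1$ is their number. $R^{(i)}$ is the polyhedral complex on $\mathbb{R}^{n_{i-1}}$ induced by the hyperplanes $\{x:\pi_jA_i(x)=0\}$, $1\le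 j\le n_i$: its cells are the nonempty intersections obtained by choosing for each $j$ one of $\{\pi_jA_i\ge0\},\{\pi_jA_i\le0\},\{\pi_jA_i=0\}$. The canonical polyhedral complex: $\mathcal{C}(F_{(1)})=R^{(1)}$, $\mathcal{C}(F_{(k)})=\{C\cap F_{(k-1)}^{-1}(R)\ne\emptyset: C\in\mathcal{C}(F_{(k-1)}), R\in R^{(k)}\}$ for $2\le k\le m+1$ (using the arrangement of $G$ at step $m+1$), and $\mathcal{C}(F)$ is the last one; it is a polyhedral complex on $\mathbb{R}^{n_0}$. *)

theory Defs
  imports "HOL-Analysis.Analysis"
begin

text \<open>
A ReLU network of architecture (n0, n1, ..., nm, 1) with input space real^'n
(so n0 = CARD('n)) is given by
 - widths  n :: nat => nat  (n i = width of layer i, for 1 <= i <= m+1; n (m+1) = 1),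
 - first-layer weights  w1 j :: real^'n  and biases  b 1 j  (j < n 1),
 - for layers 2 <= i <= m+1: weights  W i j l  (j < n i, l < n (i-1)) and biases  b i j.
Neurons are indexed from 0, i.e. j < n i.  Hidden layer values are represented as
functions nat => real which vanish outside {..< n i}.
\<close>

text \<open>Pre-activation of neuron j in layer i, i.e. the node map F_ij = pi_j o A_i o F_(i-1).\<close>
fun node :: "(nat \<Rightarrow> real^'n) \<Rightarrow> (nat \<Rightarrow> nat \<Rightarrow> nat \<Rightarrow> real) \<Rightarrow> (nat \<Rightarrow> nat \<Rightarrow> real)
    \<Rightarrow> (nat \<Rightarrow> nat) \<Rightarrow> nat \<Rightarrow> nat \<Rightarrow> real^'n \<Rightarrow> real" where
  "node w1 W b n 0 j x = 0"
| "node w1 W b n (Suc 0) j x = w1 j \<bullet> x + b 1 j"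
| "node w1 W b n (Suc (Suc i)) j x =
     (\<Sum>l<n (Suc i). W (Suc (Suc i)) j l * max 0 (node w1 W b n (Suc i) l x)) + b (Suc (Suc i)) j"

definition hid :: "(nat \<Rightarrow> real^'n) \<Rightarrow> (nat \<Rightarrow> nat \<Rightarrow> nat \<Rightarrow> real) \<Rightarrow> (nat \<Rightarrow> nat \<Rightarrow> real)
    \<Rightarrow> (nat \<Rightarrow> nat) \<Rightarrow> nat \<Rightarrow> real^'n \<Rightarrow> (nat \<Rightarrow> real)" where
  "hid w1 W b n k x = (\<lambda>l. if l < n k then max 0 (node w1 W b n k l x) else 0)"

definition scond :: "int \<Rightarrow> real \<Rightarrow> bool" where
  "scond s t = (if s = 0 then t = 0 else if s > 0 then t \<ge> 0 else t \<le> 0)"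

definition arr1 :: "(nat \<Rightarrow> real^'n) \<Rightarrow> (nat \<Rightarrow> nat \<Rightarrow> real) \<Rightarrow> (nat \<Rightarrow> nat) \<Rightarrow> (real^'n) set set" where
  "arr1 w1 b n = {R. \<exists>\<sigma>. (\<forall>j<n 1. \<sigma> j \<in> {-1, 0, 1}) \<and>
       R = {x. \<forall>j<n 1. scond (\<sigma> j) (w1 j \<bullet> x + b 1 j)} \<and> R \<noteq> {}}"

definition arrk :: "(nat \<Rightarrow> nat \<Rightarrow> nat \<Rightarrow> real) \<Rightarrow> (nat \<Rightarrow> nat \<Rightarrow> real) \<Rightarrow> (nat \<Rightarrow> nat) \<Rightarrow> nat
    \<Rightarrow> (nat \<Rightarrow> real) set set" where
  "arrk W b n k = {R. \<exists>\<sigma>. (\<forall>j<n k. \<sigma> j \<in> {-1, 0, 1}) \<and>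
       R = {y. (\<forall>l. n (k - 1) \<le> l \<longrightarrow> y l = 0) \<and>
               (\<forall>j<n k. scond (\<sigma> j) ((\<Sum>l<n (k - 1). W k j l * y l) + b k j))} \<and> R \<noteq> {}}"

fun canon :: "(nat \<Rightarrow> real^'n) \<Rightarrow> (nat \<Rightarrow> nat \<Rightarrow> nat \<Rightarrow> real) \<Rightarrow> (nat \<Rightarrow> nat \<Rightarrow> real)
    \<Rightarrow> (nat \<Rightarrow> nat) \<Rightarrow> nat \<Rightarrow> (real^'n) set set" where
  "canon w1 W b n 0 = {UNIV}"
| "canon w1 W b n (Suc 0) = arr1 w1 b n"
| "canon w1 W b n (Suc (Suc k)) =
     {D. \<exists>C R. C \<in> canon w1 W b n (Suc k) \<and> R \<in> arrk W b n (Suc (Suc k)) \<and>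
            D = C \<inter> hid w1 W b n (Suc k) -` R \<and> D \<noteq> {}}"

definition signseq :: "(nat \<Rightarrow> real^'n) \<Rightarrow> (nat \<Rightarrow> nat \<Rightarrow> nat \<Rightarrow> real) \<Rightarrow> (nat \<Rightarrow> nat \<Rightarrow> real)
    \<Rightarrow> (nat \<Rightarrow> nat) \<Rightarrow> nat \<Rightarrow> (real^'n) set \<Rightarrow> nat \<times> nat \<Rightarrow> real" where
  "signseq w1 W b n m C = (\<lambda>(i, j). if 1 \<le> i \<and> i \<le> Suc m \<and> j < n i
       then sgn (node w1 W b n i j (SOME x. x \<in> rel_interior C)) else 0)"

end

theory Submission
  imports Defs
begin

text \<open>
  Every cell of the canonical complex is a sign cell: the set of inputs at which each node
  map F_ij, up to the current layer, has a prescribed weak sign (>= 0, <= 0 or = 0).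
  On a sign cell all ReLUs act linearly, so every node map is affine along segments of the
  cell; in particular the cell is convex. A function that is affine along segments and of
  constant weak sign on a convex set, and vanishes at one relative interior point, vanishes
  on the whole set. Hence the signs of the node maps are constant on the relative interior,
  and the cell is recovered as the sign cell of these signs, which gives injectivity.
\<close>

definition sign_cell :: "(nat \<Rightarrow> real^'n) \<Rightarrow> (nat \<Rightarrow> nat \<Rightarrow> nat \<Rightarrow> real) \<Rightarrow> (nat \<Rightarrow> nat \<Rightarrow> real)
    \<Rightarrow> (nat \<Rightarrow> nat) \<Rightarrow> nat \<Rightarrow> (nat \<Rightarrow> nat \<Rightarrow> int) \<Rightarrow> (real^'n) set" where
  "sign_cell w1 W b n k \<sigma> =
     {x. \<forall>i\<in>{1..k}. \<forall>j<n i. scond (\<sigma> i j) (node w1 W b n i j x)}"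

definition sign_pattern :: "(nat \<Rightarrow> real^'n) \<Rightarrow> (nat \<Rightarrow> nat \<Rightarrow> nat \<Rightarrow> real) \<Rightarrow> (nat \<Rightarrow> nat \<Rightarrow> real)
    \<Rightarrow> (nat \<Rightarrow> nat) \<Rightarrow> real^'n \<Rightarrow> nat \<Rightarrow> nat \<Rightarrow> int" where
  "sign_pattern w1 W b n x = (\<lambda>i j. \<lfloor>sgn (node w1 W b n i j x)\<rfloor>)"

lemma scond_mult_nonneg: "scond s a \<Longrightarrow> scond s c \<Longrightarrow> 0 \<le> a * c"
  by (auto simp: scond_def zero_le_mult_iff split: if_splits)

lemma scond_convex_combination:
  fixes a c t :: real
  assumes "scond s a" "scond s c" "0 \<le> t" "t \<le> 1"
  shows "scond s ((1 - t) * a + t * c)"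
  using assms by (auto simp: scond_def add_nonpos_nonpos mult_nonneg_nonpos)

lemma scond_floor_sgn:
  assumes "scond s a"
  shows "scond \<lfloor>sgn a\<rfloor> c \<longleftrightarrow> scond s c \<and> (a = 0 \<longrightarrow> c = 0)"
  using assms by (auto simp: scond_def sgn_if floor_minus)

lemma max_0_convex_combination:
  fixes a c t :: real
  assumes "0 \<le> a * c" "0 \<le> t" "t \<le> 1"
  shows "max 0 ((1 - t) * a + t * c) = (1 - t) * max 0 a + t * max 0 c"
proof -
  have "0 \<le> a \<and> 0 \<le> c \<or> a \<le> 0 \<and> c \<le> 0"
    using assms(1) by (auto simp: zero_le_mult_iff)
  then show ?thesis
    using assms(2,3) by (auto simp: add_nonpos_nonpos mult_nonneg_nonpos)
qed

lemma zero_at_rel_interior_spreads: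
  fixes f :: "'a::euclidean_space \<Rightarrow> real"
  assumes "convex C" and x0: "x0 \<in> rel_interior C" and y: "y \<in> C" and "f x0 = 0"
    and affine: "\<And>u v t. u \<in> C \<Longrightarrow> v \<in> C \<Longrightarrow> 0 \<le> t \<Longrightarrow> t \<le> 1
                   \<Longrightarrow> f ((1 - t) *\<^sub>R u + t *\<^sub>R v) = (1 - t) * f u + t * f v"
    and same_sign: "\<And>u v. u \<in> C \<Longrightarrow> v \<in> C \<Longrightarrow> 0 \<le> f u * f v"
  shows "f y = 0"
proof -
  txt \<open>x0 is a proper convex combination of y and a point p of C beyond x0.\<close>
  obtain e where e: "e > 1" and "(1 - e) *\<^sub>R y + e *\<^sub>R x0 \<in> C"
    using convex_rel_interior_if2[OF \<open>convex C\<close> x0, rule_format, OF hull_inc[OF y]] by blast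
  moreover define p where "p = (1 - e) *\<^sub>R y + e *\<^sub>R x0"
  ultimately have p: "p \<in> C" by simp
  define t where "t = 1 / e"
  have t: "0 < t" "t < 1" using e by (auto simp: t_def)
  have "(1 - t) *\<^sub>R y + t *\<^sub>R p = ((1 - t) + t * (1 - e)) *\<^sub>R y + (t * e) *\<^sub>R x0"
    by (simp add: p_def algebra_simps)
  also have "\<dots> = x0" using e by (simp add: t_def field_simps)
  finally have "f x0 = (1 - t) * f y + t * f p"
    using affine[OF y p] t by (metis less_imp_le)
  then have "(1 - t) * f y + t * f p = 0" using \<open>f x0 = 0\<close> by simp
  then have "(1 - t) * (f y * f y) + t * (f y * f p) = 0"
    by (metis distrib_left mult.left_commute mult_zero_right)
  moreover have "0 \<le> t * (f y * f p)"
    using same_sign[OF y p] t by simp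
  ultimately have "(1 - t) * (f y * f y) \<le> 0" by linarith
  then have "f y * f y \<le> 0" using t by (simp add: mult_le_0_iff)
  then have "f y * f y = 0" using zero_le_square[of "f y"] by linarith
  then show ?thesis by simp
qed

lemma node_Suc_Suc_hid:
  "node w1 W b n (Suc (Suc k)) j x
     = (\<Sum>l<n (Suc k). W (Suc (Suc k)) j l * hid w1 W b n (Suc k) x l) + b (Suc (Suc k)) j"
  by (auto simp: hid_def intro: sum.cong)

lemma sign_cellD:
  "x \<in> sign_cell w1 W b n k \<sigma> \<Longrightarrow> i \<in> {1..k} \<Longrightarrow> j < n i
     \<Longrightarrow> scond (\<sigma> i j) (node w1 W b n i j x)"
  by (simp add: sign_cell_def)

lemma sign_cell_Suc:
  "sign_cell w1 W b n (Suc k) \<sigma> = sign_cell w1 W b n k \<sigma> \<inter>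
     {x. \<forall>j<n (Suc k). scond (\<sigma> (Suc k) j) (node w1 W b n (Suc k) j x)}"
  by (auto simp: sign_cell_def atLeastAtMostSuc_conv simp del: node.simps)

lemma sign_cell_fun_upd_above: "k < i \<Longrightarrow> sign_cell w1 W b n k (\<sigma>(i := \<tau>)) = sign_cell w1 W b n k \<sigma>"
  by (auto simp: sign_cell_def simp del: node.simps)

lemma sign_cell_cong:
  "(\<And>i j. i \<in> {1..k} \<Longrightarrow> j < n i \<Longrightarrow> \<sigma> i j = \<tau> i j)
     \<Longrightarrow> sign_cell w1 W b n k \<sigma> = sign_cell w1 W b n k \<tau>"
  by (auto simp: sign_cell_def simp del: node.simps)

lemma canon_nonempty: "D \<in> canon w1 W b n (Suc k) \<Longrightarrow> D \<noteq> {}"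
  by (cases k) (auto simp: arr1_def)

lemma canon_eq_sign_cell: "D \<in> canon w1 W b n (Suc k) \<Longrightarrow> \<exists>\<sigma>. D = sign_cell w1 W b n (Suc k) \<sigma>"
proof (induction k arbitrary: D)
  case 0
  then obtain \<sigma> where "D = {x. \<forall>j<n 1. scond (\<sigma> j) (w1 j \<bullet> x + b 1 j)}"
    by (auto simp: arr1_def)
  then have "D = sign_cell w1 W b n 1 (\<lambda>_. \<sigma>)"
    by (auto simp: sign_cell_def)
  then show ?case by auto
next
  case (Suc k)
  then obtain C R where C: "C \<in> canon w1 W b n (Suc k)" and R: "R \<in> arrk W b n (Suc (Suc k))"
    and D: "D = C \<inter> hid w1 W b n (Suc k) -` R" by auto
  obtain \<sigma> where C_eq: "C = sign_cell w1 W b n (Suc k) \<sigma>" using Suc.IH[OF C] by blast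
  obtain \<sigma>' where R_eq: "R = {y. (\<forall>l. n (Suc k) \<le> l \<longrightarrow> y l = 0) \<and>
      (\<forall>j<n (Suc (Suc k)). scond (\<sigma>' j) ((\<Sum>l<n (Suc k). W (Suc (Suc k)) j l * y l) + b (Suc (Suc k)) j))}"
    using R by (auto simp: arrk_def)
  have "hid w1 W b n (Suc k) x \<in> R \<longleftrightarrow>
      (\<forall>j<n (Suc (Suc k)). scond (\<sigma>' j) (node w1 W b n (Suc (Suc k)) j x))" for x
    unfolding R_eq node_Suc_Suc_hid by (simp add: hid_def)
  then have "D = sign_cell w1 W b n (Suc k) \<sigma> \<inter>
      {x. \<forall>j<n (Suc (Suc k)). scond (\<sigma>' j) (node w1 W b n (Suc (Suc k)) j x)}"
    unfolding D C_eq by (auto simp del: node.simps)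
  also have "\<dots> = sign_cell w1 W b n (Suc (Suc k)) (\<sigma>(Suc (Suc k) := \<sigma>'))"
    by (simp add: sign_cell_Suc[where k = "Suc k"] sign_cell_fun_upd_above del: node.simps)
  finally show ?case by blast
qed

text \<open>On a sign cell every ReLU feeding into layers up to k acts linearly.\<close>
lemma node_affine_on_sign_cell:
  assumes u: "u \<in> sign_cell w1 W b n k \<sigma>" and v: "v \<in> sign_cell w1 W b n k \<sigma>"
    and t: "0 \<le> t" "t \<le> 1" and "i \<le> k"
  shows "node w1 W b n i j ((1 - t) *\<^sub>R u + t *\<^sub>R v)
           = (1 - t) * node w1 W b n i j u + t * node w1 W b n i j v"
  using \<open>i \<le> k\<close>
proof (induction i arbitrary: j rule: induct_nat_012)
  case 1
  then show ?case by (simp add: algebra_simps inner_add_right)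
next
  case (ge2 i)
  let ?N = "\<lambda>l x. node w1 W b n (Suc i) l x"
  let ?S = "\<lambda>x. \<Sum>l<n (Suc i). W (Suc (Suc i)) j l * max 0 (?N l x)"
  have "max 0 (?N l ((1 - t) *\<^sub>R u + t *\<^sub>R v)) = (1 - t) * max 0 (?N l u) + t * max 0 (?N l v)"
    if "l < n (Suc i)" for l
  proof -
    have "Suc i \<in> {1..k}" using ge2.prems by simp
    then have "0 \<le> ?N l u * ?N l v"
      using scond_mult_nonneg[OF sign_cellD[OF u _ that] sign_cellD[OF v _ that]] by blast
    then show ?thesis
      using ge2.IH(2) ge2.prems t by (simp add: max_0_convex_combination)
  qed
  then have "node w1 W b n (Suc (Suc i)) j ((1 - t) *\<^sub>R u + t *\<^sub>R v)
      = (\<Sum>l<n (Suc i). W (Suc (Suc i)) j l * ((1 - t) * max 0 (?N l u) + t * max 0 (?N l v)))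
        + b (Suc (Suc i)) j"
    by (simp cong: sum.cong_simp)
  also have "\<dots> = (1 - t) * ?S u + t * ?S v + b (Suc (Suc i)) j"
    by (simp add: distrib_left sum.distrib sum_distrib_left mult.left_commute)
  also have "\<dots> = (1 - t) * (?S u + b (Suc (Suc i)) j) + t * (?S v + b (Suc (Suc i)) j)"
    using t by (simp add: algebra_simps)
  finally show ?case by simp
qed simp

lemma sign_cell_convex: "convex (sign_cell w1 W b n k \<sigma>)"
  unfolding convex_alt
proof (intro ballI allI impI)
  fix u v and t :: real
  assume u: "u \<in> sign_cell w1 W b n k \<sigma>" and v: "v \<in> sign_cell w1 W b n k \<sigma>" and t: "0 \<le> t \<and> t \<le> 1"
  show "(1 - t) *\<^sub>R u + t *\<^sub>R v \<in> sign_cell w1 W b n k \<sigma>"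
    unfolding sign_cell_def
  proof (intro CollectI ballI allI impI)
    fix i j assume i: "i \<in> {1..k}" and j: "j < n i"
    have "scond (\<sigma> i j) ((1 - t) * node w1 W b n i j u + t * node w1 W b n i j v)"
      using scond_convex_combination sign_cellD[OF u i j] sign_cellD[OF v i j] t by blast
    then show "scond (\<sigma> i j) (node w1 W b n i j ((1 - t) *\<^sub>R u + t *\<^sub>R v))"
      using node_affine_on_sign_cell[OF u v] i t by simp
  qed
qed

lemma node_zero_on_sign_cell:
  assumes C: "C = sign_cell w1 W b n k \<sigma>" and x0: "x0 \<in> rel_interior C" and y: "y \<in> C"
    and i: "i \<in> {1..k}" and j: "j < n i" and zero: "node w1 W b n i j x0 = 0"
  shows "node w1 W b n i j y = 0"
proof (rule zero_at_rel_interior_spreads[where f = "node w1 W b n i j", OF _ x0 y zero])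
  show "convex C" using C sign_cell_convex by simp
  show "node w1 W b n i j ((1 - t) *\<^sub>R u + t *\<^sub>R v)
          = (1 - t) * node w1 W b n i j u + t * node w1 W b n i j v"
    if "u \<in> C" "v \<in> C" "0 \<le> t" "t \<le> 1" for u v t
    using that i unfolding C by (intro node_affine_on_sign_cell) auto
  show "0 \<le> node w1 W b n i j u * node w1 W b n i j v" if "u \<in> C" "v \<in> C" for u v
    using scond_mult_nonneg sign_cellD that i j unfolding C by blast
qed

lemma sgn_node_eq_on_rel_interior:
  assumes C: "C = sign_cell w1 W b n k \<sigma>" and x: "x \<in> rel_interior C" and y: "y \<in> rel_interior C"
    and i: "i \<in> {1..k}" and j: "j < n i"
  shows "sgn (node w1 W b n i j x) = sgn (node w1 W b n i j y)"
proof -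
  have "x \<in> C" "y \<in> C" using x y rel_interior_subset by auto
  then have "scond (\<sigma> i j) (node w1 W b n i j x)" "scond (\<sigma> i j) (node w1 W b n i j y)"
    using sign_cellD i j unfolding C by blast+
  moreover have "node w1 W b n i j x = 0 \<longleftrightarrow> node w1 W b n i j y = 0"
    using \<open>x \<in> C\<close> \<open>y \<in> C\<close> node_zero_on_sign_cell[OF C x _ i j] node_zero_on_sign_cell[OF C y _ i j]
    by blast
  ultimately show ?thesis by (auto simp: scond_def sgn_if split: if_splits)
qed

lemma sign_cell_eq_sign_pattern:
  assumes C: "C = sign_cell w1 W b n k \<sigma>" and x0: "x0 \<in> rel_interior C"
  shows "C = sign_cell w1 W b n k (sign_pattern w1 W b n x0)"
proof -
  have "x0 \<in> C" using x0 rel_interior_subset by auto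
  then have x0_sign: "scond (\<sigma> i j) (node w1 W b n i j x0)" if "i \<in> {1..k}" "j < n i" for i j
    using sign_cellD that unfolding C by blast
  have pattern_iff: "scond (sign_pattern w1 W b n x0 i j) (node w1 W b n i j x) \<longleftrightarrow>
      scond (\<sigma> i j) (node w1 W b n i j x) \<and> (node w1 W b n i j x0 = 0 \<longrightarrow> node w1 W b n i j x = 0)"
    if "i \<in> {1..k}" "j < n i" for i j x
    unfolding sign_pattern_def using scond_floor_sgn[OF x0_sign[OF that]] .
  show ?thesis
  proof (intro equalityI subsetI)
    fix x assume x: "x \<in> C"
    show "x \<in> sign_cell w1 W b n k (sign_pattern w1 W b n x0)"
      unfolding sign_cell_def
    proof (intro CollectI ballI allI impI)
      fix i j assume i: "i \<in> {1..k}" and j: "j < n i"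
      have "scond (\<sigma> i j) (node w1 W b n i j x)" using sign_cellD x i j unfolding C by blast
      then show "scond (sign_pattern w1 W b n x0 i j) (node w1 W b n i j x)"
        using pattern_iff[OF i j] node_zero_on_sign_cell[OF C x0 x i j] by blast
    qed
  next
    fix x assume x: "x \<in> sign_cell w1 W b n k (sign_pattern w1 W b n x0)"
    show "x \<in> C"
      unfolding C sign_cell_def
    proof (intro CollectI ballI allI impI)
      fix i j assume i: "i \<in> {1..k}" and j: "j < n i"
      have "scond (sign_pattern w1 W b n x0 i j) (node w1 W b n i j x)"
        using sign_cellD[OF x i j] .
      then show "scond (\<sigma> i j) (node w1 W b n i j x)" using pattern_iff[OF i j] by blast
    qed
  qed
qed

lemma canon_rel_interior_nonempty:
  assumes "C \<in> canon w1 W b n (Suc k)"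
  shows "rel_interior C \<noteq> {}"
proof -
  obtain \<sigma> where "C = sign_cell w1 W b n (Suc k) \<sigma>" using canon_eq_sign_cell[OF assms] by blast
  then have "convex C" by (simp add: sign_cell_convex)
  then show ?thesis using rel_interior_eq_empty[of C] canon_nonempty[OF assms] by simp
qed

lemma canon_sgn_node_constant:
  assumes C: "C \<in> canon w1 W b n (Suc k)" and i: "i \<in> {1..Suc k}" and j: "j < n i"
  shows "\<exists>s \<in> {-1, 0, 1::real}. \<forall>x \<in> rel_interior C. sgn (node w1 W b n i j x) = s"
proof -
  obtain \<sigma> where \<sigma>: "C = sign_cell w1 W b n (Suc k) \<sigma>" using canon_eq_sign_cell[OF C] by blast
  obtain x0 where x0: "x0 \<in> rel_interior C" using canon_rel_interior_nonempty[OF C] by blast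
  have "\<forall>x \<in> rel_interior C. sgn (node w1 W b n i j x) = sgn (node w1 W b n i j x0)"
    using sgn_node_eq_on_rel_interior[OF \<sigma> _ x0 i j] by blast
  moreover have "sgn (node w1 W b n i j x0) \<in> {-1, 0, 1}" by (simp add: sgn_if)
  ultimately show ?thesis by blast
qed

lemma canon_eq_sign_cell_sign_pattern:
  assumes "C \<in> canon w1 W b n (Suc k)" and "x0 \<in> rel_interior C"
  shows "C = sign_cell w1 W b n (Suc k) (sign_pattern w1 W b n x0)"
proof -
  obtain \<sigma> where "C = sign_cell w1 W b n (Suc k) \<sigma>" using canon_eq_sign_cell[OF assms(1)] by blast
  from sign_cell_eq_sign_pattern[OF this assms(2)] show ?thesis .
qed

theorem theorem14:
  fixes w1 :: "nat \<Rightarrow> real^'n" and W :: "nat \<Rightarrow> nat \<Rightarrow> nat \<Rightarrow> real"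
    and b :: "nat \<Rightarrow> nat \<Rightarrow> real" and n :: "nat \<Rightarrow> nat" and m :: nat
  assumes "n 0 = CARD('n)" and "n (Suc m) = 1"
  shows "(\<forall>C \<in> canon w1 W b n (Suc m). \<forall>i \<in> {1..Suc m}. \<forall>j < n i.
            \<exists>\<sigma> \<in> {-1, 0, 1::real}. \<forall>x \<in> rel_interior C. sgn (node w1 W b n i j x) = \<sigma>)
         \<and> inj_on (signseq w1 W b n m) (canon w1 W b n (Suc m))"
proof
  show "\<forall>C \<in> canon w1 W b n (Suc m). \<forall>i \<in> {1..Suc m}. \<forall>j < n i.
          \<exists>\<sigma> \<in> {-1, 0, 1::real}. \<forall>x \<in> rel_interior C. sgn (node w1 W b n i j x) = \<sigma>"
    using canon_sgn_node_constant by blast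
  let ?p = "\<lambda>C. SOME x. x \<in> rel_interior C"
  show "inj_on (signseq w1 W b n m) (canon w1 W b n (Suc m))"
  proof (rule inj_onI)
    fix C C' assume C: "C \<in> canon w1 W b n (Suc m)" and C': "C' \<in> canon w1 W b n (Suc m)"
      and same_signs: "signseq w1 W b n m C = signseq w1 W b n m C'"
    have p: "?p C \<in> rel_interior C" "?p C' \<in> rel_interior C'"
      using canon_rel_interior_nonempty[OF C] canon_rel_interior_nonempty[OF C']
      by (simp_all add: some_in_eq)
    have "C = sign_cell w1 W b n (Suc m) (sign_pattern w1 W b n (?p C))"
      by (rule canon_eq_sign_cell_sign_pattern[OF C p(1)])
    also have "\<dots> = sign_cell w1 W b n (Suc m) (sign_pattern w1 W b n (?p C'))"
    proof (rule sign_cell_cong)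
      fix i j assume "i \<in> {1..Suc m}" "j < n i"
      then show "sign_pattern w1 W b n (?p C) i j = sign_pattern w1 W b n (?p C') i j"
        using fun_cong[OF same_signs, of "(i, j)"] by (simp add: signseq_def sign_pattern_def)
    qed
    also have "\<dots> = C'" by (rule canon_eq_sign_cell_sign_pattern[OF C' p(2), symmetric])
    finally show "C = C'" .
  qed
qed

end
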